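(* Let $a\in[0,\infty)$ and let $\theta:[0,1]\to[0,\infty]$ and $\vartheta:[0,\infty]\to[0,1]$ be continuous and decreasing functions such that (1) $\theta(x)=\infty$ if and only if $x=0$; (2) $\theta(x)=\frac{a}{2}$ if and only if $x=1$; (3) $\vartheta(x)=1$ if and only if $x\in[0,a]$; (4) $\vartheta(x)=0$ if and only if $x=\infty$. Then the function $O_{\theta,\vartheta}:[0,1]^2\to[0,1]$ defined by $O_{\theta,\vartheta}(x,y)=\vartheta(\theta(x)+\theta(y))$ is an overlap function.
   Context: "Decreasing" means non-increasing and "increasing" means non-decreasing. Arithmetic in $[0,\infty]$ uses $c+\infty=\infty$; continuity on $[0,\infty]$ refers to the usual topology of the extended half-line. An overlap function is a map $O:[0,1]^2\to[0,1]$ that is (O1) commutative, (O2) $O(x,y)=0$ iff $xy=0$, (O3) $O(x,y)=1$ iff $xy=1$, (O4) increasing in each variable, (O5) continuous. *)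

theory Defs
  imports "HOL-Analysis.Analysis" "HOL-Library.Extended_Nonnegative_Real"
begin

definition overlap_function :: "(real \<Rightarrow> real \<Rightarrow> real) \<Rightarrow> bool" where
  "overlap_function Ov \<longleftrightarrow>
     (\<forall>x\<in>{0..1}. \<forall>y\<in>{0..1}. Ov x y \<in> {0..1}) \<and>
     (\<forall>x\<in>{0..1}. \<forall>y\<in>{0..1}. Ov x y = Ov y x) \<and>
     (\<forall>x\<in>{0..1}. \<forall>y\<in>{0..1}. Ov x y = 0 \<longleftrightarrow> x * y = 0) \<and>
     (\<forall>x\<in>{0..1}. \<forall>y\<in>{0..1}. Ov x y = 1 \<longleftrightarrow> x * y = 1) \<and>
     (\<forall>x\<in>{0..1}. \<forall>y\<in>{0..1}. \<forall>z\<in>{0..1}. x \<le> y \<longrightarrow> Ov x z \<le> Ov y z \<and> Ov z x \<le> Ov z y) \<and>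
     continuous_on ({0..1} \<times> {0..1}) (\<lambda>(x, y). Ov x y)"

end

theory Submission
  imports Defs
begin

(* Everything except (O3) transfers directly from the hypotheses; for (O2) note that a sum in
   [0,\<infinity>] is infinite iff one summand is. For (O3): as \<theta> decreases to \<theta>(1) = a/2, all its
   values are at least a/2, so \<theta>(x) + \<theta>(y) \<le> a forces \<theta>(x) = \<theta>(y) = a/2, i.e. x = y = 1. *)

lemma ennreal_add_le_double_iff:
  fixes c s t :: ennreal
  assumes "c \<le> s" "c \<le> t"
  shows "s + t \<le> c + c \<longleftrightarrow> s = c \<and> t = c"
proof
  assume sum_le: "s + t \<le> c + c"
  show "s = c \<and> t = c"
  proof (cases "c = \<infinity>")
    case True
    then show ?thesis using assms by (simp add: top_unique)
  next
    case False
    have "c + t \<le> c + c" "c + s \<le> c + c"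
      using order_trans[OF add_right_mono[OF assms(1)] sum_le]
        order_trans[OF add_left_mono[OF assms(2)] sum_le]
      by (simp_all add: add.commute)
    then have "t \<le> c" "s \<le> c"
      using False by (auto simp: ennreal_add_left_cancel_le)
    then show ?thesis using assms by auto
  qed
qed auto

lemma mono_on_antimono_compose_add:
  fixes th :: "'a::order \<Rightarrow> 'b::ordered_ab_semigroup_add" and vth :: "'b \<Rightarrow> 'c::order"
  assumes "antimono_on S th" "antimono vth"
  shows "mono_on S (\<lambda>x. vth (th x + t))"
proof (rule mono_onI)
  fix x y assume "x \<in> S" "y \<in> S" "x \<le> y"
  then have "th y + t \<le> th x + t"
    using assms(1) by (intro add_right_mono) (simp add: monotone_on_def)
  then show "vth (th x + t) \<le> vth (th y + t)"
    using assms(2) by (simp add: antimono_def)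
qed

lemma continuous_on_compose_add_pair:
  fixes th :: "'a::topological_space \<Rightarrow> 'b::topological_monoid_add"
    and vth :: "'b \<Rightarrow> 'c::topological_space"
  assumes "continuous_on S th" "continuous_on UNIV vth"
  shows "continuous_on (S \<times> S) (\<lambda>(x, y). vth (th x + th y))"
proof -
  have "continuous_on (S \<times> S) (\<lambda>p. th (fst p) + th (snd p))"
    by (intro continuous_on_add continuous_on_compose2[OF assms(1)] continuous_intros) auto
  then have "continuous_on (S \<times> S) (\<lambda>p. vth (th (fst p) + th (snd p)))"
    by (rule continuous_on_compose2[OF assms(2)]) auto
  then show ?thesis by (simp add: case_prod_beta)
qed

theorem theorem3p2:
  fixes a :: real and th :: "real \<Rightarrow> ennreal" and vth :: "ennreal \<Rightarrow> real"
  assumes a_nonneg: "0 \<le> a"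
    and th_cont: "continuous_on {0..1} th"
    and th_dec: "antimono_on {0..1} th"
    and vth_range: "\<forall>t. vth t \<in> {0..1}"
    and vth_cont: "continuous_on UNIV vth"
    and vth_dec: "antimono vth"
    and h1: "\<forall>x\<in>{0..1}. th x = \<infinity> \<longleftrightarrow> x = 0"
    and h2: "\<forall>x\<in>{0..1}. th x = ennreal (a / 2) \<longleftrightarrow> x = 1"
    and h3: "\<forall>t. vth t = 1 \<longleftrightarrow> t \<le> ennreal a"
    and h4: "\<forall>t. vth t = 0 \<longleftrightarrow> t = \<infinity>"
  shows "overlap_function (\<lambda>x y. vth (th x + th y))"
proof -
  have th_one: "th 1 = ennreal (a / 2)"
    using h2 by auto
  have a_halves: "ennreal (a / 2) + ennreal (a / 2) = ennreal a"
    using a_nonneg by (simp flip: ennreal_plus)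
  have th_min: "ennreal (a / 2) \<le> th x" if "x \<in> {0..1}" for x
    using th_dec that unfolding th_one[symmetric] by (auto simp: monotone_on_def)
  have sum_le_iff: "th x + th y \<le> ennreal a \<longleftrightarrow> x = 1 \<and> y = 1"
    if "x \<in> {0..1}" "y \<in> {0..1}" for x y
    using ennreal_add_le_double_iff[OF th_min th_min] h2 that by (simp add: a_halves)
  have mono: "mono_on {0..1} (\<lambda>x. vth (th x + t))" for t
    using mono_on_antimono_compose_add[OF th_dec vth_dec] .
  show ?thesis
    unfolding overlap_function_def
  proof (intro conjI ballI impI)
    fix x y z :: real
    assume "x \<in> {0..1}" "y \<in> {0..1}" "z \<in> {0..1}" "x \<le> y"
    then show "vth (th x + th z) \<le> vth (th y + th z)"
      using mono_onD[OF mono] by blast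
    then show "vth (th z + th x) \<le> vth (th z + th y)"
      by (simp add: add.commute)
  qed (use vth_range h1 h4 h3 sum_le_iff continuous_on_compose_add_pair[OF th_cont vth_cont]
         in \<open>auto simp: add.commute mult_eq_1\<close>)
qed

end
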